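(* Let $q>2$ be a prime power and let $u,v$ be arbitrary non-zero elements of $\mathbb{F}_q$. Set $\theta=\theta(q-1)$, $\tau=\tau(q-1)$, $W=W(q-1)$. Then $$\left| N(q,u,v) - \theta^3\tau\,(q-1)\, q\right| \leq \theta^4 W^3\,(q-1)\sqrt{q}.$$
   Context: $\mathbb{F}_q$ is the finite field of order $q$. A primitive element of $\mathbb{F}_q$ is a generator of the cyclic group $\mathbb{F}_q^*$. For non-zero $u,v\in\mathbb{F}_q$, a pair $(a,b)$ of primitive elements of $\mathbb{F}_q$ is called $(u,v)$-primitive if additionally $ua+vb$ and $va^{-1}+ub^{-1}$ are both primitive; $N(q,u,v)$ denotes the number of $(u,v)$-primitive pairs in $\mathbb{F}_q$. For a positive integer $m$: $\omega(m)$ is the number of distinct prime divisors of $m$, $W(m)=2^{\omega(m)}$, $\theta(m)=\phi(m)/m$ with $\phi$ Euler's function, and $\tau(m)=\prod_{l\mid m}\left(1-\frac{1}{l-1}+\frac{1}{(l-1)^2}\right)$, the product over the distinct primes $l$ dividing $m$. *)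

theory Defs
  imports "HOL-Number_Theory.Number_Theory" "HOL-Library.Cardinality"
begin

text \<open>The finite field F_q is modelled as a finite field type 'a with q = CARD('a).
  A primitive element is a generator of the cyclic multiplicative group F_q^*.\<close>

definition primitive_elem :: "'a::{field,finite} \<Rightarrow> bool" where
  "primitive_elem x \<longleftrightarrow> x \<noteq> 0 \<and> (\<forall>y. y \<noteq> 0 \<longrightarrow> (\<exists>k::nat. y = x ^ k))"

definition uv_primitive :: "'a::{field,finite} \<Rightarrow> 'a \<Rightarrow> 'a \<Rightarrow> 'a \<Rightarrow> bool" where
  "uv_primitive u v a b \<longleftrightarrow> primitive_elem a \<and> primitive_elem b \<and>
     primitive_elem (u * a + v * b) \<and> primitive_elem (v * inverse a + u * inverse b)"

definition N_uv :: "'a::{field,finite} \<Rightarrow> 'a \<Rightarrow> nat" where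
  "N_uv u v = card {(a, b). uv_primitive u v a b}"

definition omega_nat :: "nat \<Rightarrow> nat" where
  "omega_nat m = card (prime_factors m)"

definition W_nat :: "nat \<Rightarrow> nat" where
  "W_nat m = 2 ^ omega_nat m"

definition theta_nat :: "nat \<Rightarrow> real" where
  "theta_nat m = real (totient m) / real m"

definition tau_nat :: "nat \<Rightarrow> real" where
  "tau_nat m = (\<Prod>l\<in>prime_factors m.
      1 - 1 / (real l - 1) + 1 / (real l - 1) ^ 2)"

end

(*
  Write m = q - 1.  Vinogradov's formula writes the indicator of the primitive elements as a
  combination sum_t w(t) chi_t(x) of multiplicative characters, with sum_t |w(t)| = theta W and
  sum_t w(t)^4 = theta^3 tau.  Inserting it for a, b, u a + v b and v/a + u/b = (u a + v b)/(a b)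
  and substituting b = a t turns N(q, u, v) into a weighted sum, over quadruples of indices, of a
  complete character sum in a (equal to m or 0) times a Jacobi sum in t.  The quadruples
  (t, t, -t, t) have trivial Jacobi sums q - 2 and produce the main term theta^3 tau m q; every
  other surviving quadruple has a Jacobi sum of absolute value at most sqrt q, and the total
  weight of these quadruples is at most theta^4 W^3.
*)
theory Submission
  imports Defs "HOL-Algebra.Multiplicative_Group" "HOL-Library.Real_Mod"
begin

section \<open>Primitive elements and discrete logarithms\<close>

definition field_of_type :: "'a::field ring" where
  "field_of_type = \<lparr>carrier = UNIV, monoid.mult = (*), one = 1, ring.zero = 0, add = (+)\<rparr>"

lemma field_field_of_type: "field (field_of_type :: 'a::field ring)"
proof -
  have "\<exists>y. x + y = 0" for x :: 'a
    using add.right_inverse by blast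
  moreover have "x \<noteq> 0 \<Longrightarrow> \<exists>y. x * y = 1" for x :: 'a
    by (rule exI[of _ "inverse x"]) auto
  ultimately show ?thesis
    unfolding field_of_type_def by unfold_locales (auto simp: algebra_simps Units_def)
qed

lemma exists_primitive_elem: "\<exists>g::'a::{field,finite}. primitive_elem g"
proof -
  let ?F = "field_of_type :: 'a ring"
  interpret F: field ?F by (rule field_field_of_type)
  have "finite (carrier ?F)" by (simp add: field_of_type_def)
  then obtain a where a: "a \<in> carrier (mult_of ?F)"
    and gen: "carrier (mult_of ?F) = {a [^]\<^bsub>?F\<^esub> i | i::nat. i \<in> UNIV}"
    using F.finite_field_mult_group_has_gen by blast
  have pow: "a [^]\<^bsub>?F\<^esub> (i::nat) = a ^ i" for i
    by (induction i) (simp_all add: field_of_type_def mult_of_def)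
  have carrier: "carrier (mult_of ?F) = UNIV - {0}"
    by (simp add: field_of_type_def mult_of_def)
  show ?thesis
  proof (intro exI[of _ a])
    show "primitive_elem a"
      using a gen unfolding primitive_elem_def carrier pow by auto
  qed
qed

lemma nonzero_power_card_minus_one:
  fixes x :: "'a::{field,finite}"
  assumes "x \<noteq> 0"
  shows "x ^ (CARD('a) - 1) = 1"
proof -
  let ?F = "UNIV - {0::'a}"
  have inj: "inj_on ((*) x) ?F" using assms by (auto simp: inj_on_def)
  have "(*) x ` ?F = ?F"
  proof
    show "?F \<subseteq> (*) x ` ?F"
    proof
      fix y assume "y \<in> ?F"
      then have "y = x * (inverse x * y)" "inverse x * y \<in> ?F" using assms by auto
      then show "y \<in> (*) x ` ?F" by blast
    qed
  qed (use assms in auto)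
  then have "(\<Prod>y\<in>?F. y) = (\<Prod>y\<in>?F. x * y)"
    using prod.reindex[OF inj, of id] by simp
  also have "\<dots> = x ^ card ?F * (\<Prod>y\<in>?F. y)"
    by (simp add: prod.distrib)
  finally have "x ^ card ?F = 1" by simp
  then show ?thesis by (simp add: card_Diff_singleton)
qed

locale discrete_log =
  fixes g :: "'a::{field,finite}" and m :: nat
  assumes primitive_g: "primitive_elem g" and m_eq: "m = CARD('a) - 1"
begin

lemma g_nonzero: "g \<noteq> 0"
  using primitive_g by (simp add: primitive_elem_def)

lemma m_pos: "m > 0"
proof -
  have "card {0::'a, 1} \<le> CARD('a)" by (rule card_mono) auto
  then show ?thesis by (simp add: m_eq)
qed

lemma card_nonzero: "card (UNIV - {0::'a}) = m"
  by (simp add: card_Diff_singleton m_eq)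

lemma power_g_mod: "g ^ k = g ^ (k mod m)"
proof -
  have "g ^ k = (g ^ m) ^ (k div m) * g ^ (k mod m)"
    by (metis div_mult_mod_eq power_add power_mult mult.commute)
  then show ?thesis
    using nonzero_power_card_minus_one[OF g_nonzero] by (simp add: m_eq)
qed

lemma image_power_g: "(\<lambda>k. g ^ k) ` {..<m} = UNIV - {0}"
proof -
  have "\<exists>k<m. y = g ^ k" if "y \<noteq> 0" for y
  proof -
    obtain k where "y = g ^ k" using primitive_g \<open>y \<noteq> 0\<close> by (auto simp: primitive_elem_def)
    then show ?thesis using power_g_mod[of k] m_pos by (intro exI[of _ "k mod m"]) auto
  qed
  then show ?thesis using g_nonzero by fastforce
qed

lemma inj_on_power_g: "inj_on (\<lambda>k. g ^ k) {..<m}"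
  using image_power_g by (simp add: inj_on_iff_eq_card card_nonzero)

lemma power_g_eq_iff: "g ^ a = g ^ b \<longleftrightarrow> [a = b] (mod m)"
  using power_g_mod inj_on_power_g m_pos unfolding cong_def inj_on_def
  by (metis lessThan_iff mod_less_divisor)

definition dlog :: "'a \<Rightarrow> nat" where
  "dlog x = inv_into {..<m} (\<lambda>k. g ^ k) x"

lemma power_dlog: "x \<noteq> 0 \<Longrightarrow> g ^ dlog x = x"
  unfolding dlog_def using image_power_g by (simp add: f_inv_into_f)

lemma dlog_power: "dlog (g ^ k) = k mod m"
  using power_g_mod[of k] inj_on_power_g m_pos unfolding dlog_def by (simp add: inv_into_f_f)

lemma dlog_one: "dlog 1 = 0"
  using dlog_power[of 0] by simp

lemma dlog_mult: "x \<noteq> 0 \<Longrightarrow> y \<noteq> 0 \<Longrightarrow> dlog (x * y) = (dlog x + dlog y) mod m"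
  by (metis dlog_power power_add power_dlog)

lemma primitive_elem_iff_coprime_dlog: "primitive_elem x \<longleftrightarrow> x \<noteq> 0 \<and> coprime (dlog x) m"
proof (cases "x = 0")
  case True then show ?thesis by (simp add: primitive_elem_def)
next
  case False
  show ?thesis
  proof
    assume "primitive_elem x"
    then obtain k where "g = x ^ k"
      using g_nonzero by (auto simp: primitive_elem_def)
    then have "g ^ 1 = g ^ (dlog x * k)"
      by (metis power_dlog[OF False] power_mult power_one_right)
    then have "[1 = dlog x * k] (mod m)" by (simp only: power_g_eq_iff)
    then have "coprime (dlog x * k) m"
      using cong_imp_coprime coprime_1_left by blast
    then show "x \<noteq> 0 \<and> coprime (dlog x) m" using False by simp
  next
    assume "x \<noteq> 0 \<and> coprime (dlog x) m"
    then obtain k where "[dlog x * k = 1] (mod m)"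
      using cong_solve_coprime_nat by auto
    then have "g ^ (dlog x * k) = g" using power_g_eq_iff[of _ 1] by simp
    then have "x ^ k = g" by (metis power_dlog[OF False] power_mult)
    have "\<exists>j. y = x ^ j" if "y \<noteq> 0" for y
    proof -
      obtain i where "y = g ^ i" using primitive_g \<open>y \<noteq> 0\<close> by (auto simp: primitive_elem_def)
      then show ?thesis using \<open>x ^ k = g\<close> by (metis power_mult)
    qed
    then show "primitive_elem x" using False by (simp add: primitive_elem_def)
  qed
qed

end

section \<open>Multiplicative characters\<close>

definition cis2pi :: "real \<Rightarrow> complex" where
  "cis2pi t = cis (2 * pi * t)"

lemma cis2pi_add: "cis2pi (a + b) = cis2pi a * cis2pi b"
  by (simp add: cis2pi_def cis_mult distrib_left)

lemma cis2pi_zero [simp]: "cis2pi 0 = 1"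
  by (simp add: cis2pi_def)

lemma cis2pi_sum: "cis2pi (\<Sum>i\<in>A. f i) = (\<Prod>i\<in>A. cis2pi (f i))"
  by (induction A rule: infinite_finite_induct) (simp_all add: cis2pi_add)

lemma cis2pi_eq_1_iff: "cis2pi t = 1 \<longleftrightarrow> t \<in> \<int>"
proof -
  have "2 * pi * t = of_int n * (2 * pi) \<longleftrightarrow> t = of_int n" for n :: int
    by (simp add: mult.commute)
  then show ?thesis
    unfolding cis2pi_def cis_eq_1_iff Ints_def by auto
qed

lemma cis2pi_of_int [simp]: "cis2pi (of_int k) = 1"
  by (simp add: cis2pi_eq_1_iff)

lemma cis2pi_add_of_int: "cis2pi (t + of_int k) = cis2pi t"
  by (simp add: cis2pi_add)

lemma cis2pi_power: "cis2pi t ^ n = cis2pi (real n * t)"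
  by (simp add: cis2pi_def DeMoivre mult_ac)

lemma norm_cis2pi [simp]: "norm (cis2pi t) = 1"
  by (simp add: cis2pi_def)

lemma cnj_cis2pi: "cnj (cis2pi t) = cis2pi (- t)"
  by (simp add: cis2pi_def cis_cnj)

lemma sum_cis2pi_multiples:
  assumes "0 < l"
  shows "(\<Sum>s<l. cis2pi (real s * of_int k / real l)) = (if int l dvd k then of_nat l else 0)"
proof -
  define z where "z = cis2pi (of_int k / real l)"
  have "(\<Sum>s<l. cis2pi (real s * of_int k / real l)) = (\<Sum>s<l. z ^ s)"
    by (simp add: z_def cis2pi_power)
  moreover have "z = 1 \<longleftrightarrow> int l dvd k"
  proof -
    have "of_int k / real l \<in> \<int> \<longleftrightarrow> (\<exists>j::int. k = int l * j)"
      using assms by (auto simp: Ints_def field_simps) (metis of_int_eq_iff of_int_mult of_int_of_nat_eq)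
    then show ?thesis by (auto simp: z_def cis2pi_eq_1_iff)
  qed
  moreover have "z ^ l = 1"
    using assms by (simp add: z_def cis2pi_power)
  ultimately show ?thesis
    by (simp add: sum_gp_strict)
qed

context discrete_log
begin

text \<open>\<open>mchar n\<close> is the \<open>n\<close>-th power of the multiplicative character with \<open>\<chi>(g) = e(1/m)\<close>, so
  every multiplicative character of \<open>F\<^sup>*\<close> is of this form; its value at \<open>0\<close> is junk and never used.\<close>

definition mchar :: "int \<Rightarrow> 'a \<Rightarrow> complex" where
  "mchar n x = cis2pi (of_int n * real (dlog x) / real m)"

lemma mchar_mult:
  assumes "x \<noteq> 0" "y \<noteq> 0"
  shows "mchar n (x * y) = mchar n x * mchar n y"
proof -
  let ?k = "(dlog x + dlog y) div m"
  have "dlog x + dlog y = m * ?k + dlog (x * y)"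
    using dlog_mult[OF assms] by simp
  then have dlog_sum: "real (dlog x) + real (dlog y) = real m * real ?k + real (dlog (x * y))"
    by (metis of_nat_add of_nat_mult)
  have "mchar n x * mchar n y = cis2pi (of_int n * (real (dlog x) + real (dlog y)) / real m)"
    unfolding mchar_def cis2pi_add[symmetric] by (simp add: add_divide_distrib distrib_left)
  also have "of_int n * (real (dlog x) + real (dlog y)) / real m
      = of_int n * real (dlog (x * y)) / real m + of_int (n * int ?k)"
    using m_pos by (simp add: dlog_sum field_simps)
  also have "cis2pi \<dots> = mchar n (x * y)"
    by (simp only: cis2pi_add_of_int mchar_def)
  finally show ?thesis ..
qed

lemma mchar_add: "mchar (a + b) x = mchar a x * mchar b x"
  unfolding mchar_def cis2pi_add[symmetric] by (simp add: add_divide_distrib distrib_right)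

lemma mchar_trivial:
  assumes "int m dvd n"
  shows "mchar n x = 1"
proof -
  obtain k where "n = int m * k" using assms by (elim dvdE)
  then have "of_int n * real (dlog x) / real m = of_int (k * int (dlog x))"
    using m_pos by simp
  then show ?thesis unfolding mchar_def by (simp only: cis2pi_of_int)
qed

lemma norm_mchar [simp]: "norm (mchar n x) = 1"
  by (simp add: mchar_def)

lemma mchar_uminus: "mchar (- n) x = cnj (mchar n x)"
  by (simp add: mchar_def cnj_cis2pi)

lemma mchar_one [simp]: "mchar n 1 = 1"
  by (simp add: mchar_def dlog_one)

lemma mchar_inverse:
  assumes "x \<noteq> 0"
  shows "mchar n (inverse x) = cnj (mchar n x)"
proof -
  have "mchar n x * mchar n (inverse x) = 1"
    using mchar_mult[of x "inverse x" n] assms by simp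
  also have "1 = mchar n x * cnj (mchar n x)"
    by (metis complex_norm_square norm_mchar of_real_1 power_one)
  finally have "mchar n x * mchar n (inverse x) = mchar n x * cnj (mchar n x)" .
  moreover have "mchar n x \<noteq> 0"
    using norm_mchar[of n x] by (metis norm_zero zero_neq_one)
  ultimately show ?thesis
    using mult_left_cancel by blast
qed

lemma mchar_divide:
  assumes "x \<noteq> 0" "y \<noteq> 0"
  shows "mchar n (x / y) = mchar n x * cnj (mchar n y)"
  using assms by (simp add: divide_inverse mchar_mult mchar_inverse)

lemma sum_mchar: "(\<Sum>x\<in>UNIV - {0}. mchar n x) = (if int m dvd n then of_nat m else 0)"
proof -
  have "(\<Sum>x\<in>UNIV - {0}. mchar n x) = (\<Sum>k<m. mchar n (g ^ k))"
    using sum.reindex[OF inj_on_power_g, of "mchar n"] image_power_g by simp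
  also have "\<dots> = (\<Sum>k<m. cis2pi (real k * of_int n / real m))"
  proof (intro sum.cong refl)
    fix k assume "k \<in> {..<m}"
    then have "dlog (g ^ k) = k" by (simp add: dlog_power)
    then show "mchar n (g ^ k) = cis2pi (real k * of_int n / real m)"
      unfolding mchar_def by (simp only: mult.commute)
  qed
  also have "\<dots> = (if int m dvd n then of_nat m else 0)"
    by (rule sum_cis2pi_multiples[OF m_pos])
  finally show ?thesis .
qed

lemma sum_mchar_nonzero_nonone:
  "(\<Sum>x\<in>UNIV - {0, 1}. mchar n x) = (if int m dvd n then of_nat m else 0) - 1"
proof -
  have "(\<Sum>x\<in>UNIV - {0}. mchar n x) = mchar n 1 + (\<Sum>x\<in>UNIV - {0} - {1}. mchar n x)"
    by (rule sum.remove) auto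
  also have "UNIV - {0} - {1} = UNIV - {0, 1::'a}" by auto
  finally show ?thesis unfolding sum_mchar mchar_one by (simp add: algebra_simps)
qed

end

section \<open>Vinogradov's formula for the indicator of primitive elements\<close>

lemma coprime_iff_no_prime_factor_dvd:
  assumes "(m::nat) > 0"
  shows "coprime k m \<longleftrightarrow> (\<forall>l\<in>prime_factors m. \<not> l dvd k)"
proof
  assume "coprime k m"
  then show "\<forall>l\<in>prime_factors m. \<not> l dvd k"
    by (auto simp: in_prime_factors_iff dest: coprime_common_divisor not_prime_unit)
next
  assume no_dvd: "\<forall>l\<in>prime_factors m. \<not> l dvd k"
  show "coprime k m"
  proof (rule ccontr)
    assume "\<not> coprime k m"
    then obtain p where "prime p" "p dvd gcd k m"
      using prime_factor_nat coprime_iff_gcd_eq_1 by blast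
    then show False
      using no_dvd assms by (auto simp: in_prime_factors_iff)
  qed
qed

lemma of_bool_ball_not_eq_prod:
  assumes "finite P"
  shows "(of_bool (\<forall>l\<in>P. \<not> Q l) :: 'b::comm_ring_1) = (\<Prod>l\<in>P. 1 - of_bool (Q l))"
proof (cases "\<forall>l\<in>P. \<not> Q l")
  case False
  then obtain l0 where "l0 \<in> P" "Q l0" by blast
  then have "(\<Prod>l\<in>P. 1 - of_bool (Q l) :: 'b) = 0"
    using assms by (intro prod_zero) auto
  then show ?thesis using False by simp
qed simp

definition vino_coeff :: "nat \<Rightarrow> nat \<Rightarrow> real" where
  "vino_coeff l s = (if s = 0 then 1 else 0) - 1 / real l"

lemma one_minus_dvd_eq_sum_cis2pi:
  assumes "0 < l"
  shows "(1 - of_bool (l dvd k) :: complex)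
    = (\<Sum>s<l. of_real (vino_coeff l s) * cis2pi (real s * of_int (int k) / real l))"
proof -
  let ?e = "\<lambda>s. cis2pi (real s * of_int (int k) / real l)"
  have "of_real (vino_coeff l s) * ?e s = (if s = 0 then ?e s else 0) - of_real (1 / real l) * ?e s"
    for s
    unfolding vino_coeff_def of_real_diff left_diff_distrib by simp
  then have "(\<Sum>s<l. of_real (vino_coeff l s) * ?e s)
      = (\<Sum>s<l. if s = 0 then ?e s else 0) - of_real (1 / real l) * (\<Sum>s<l. ?e s)"
    by (simp add: sum_subtractf sum_distrib_left)
  also have "(\<Sum>s<l. if s = 0 then ?e s else 0) = 1"
    using assms by (simp add: sum.delta)
  also have "(\<Sum>s<l. ?e s) = (if int l dvd int k then of_nat l else 0)"
    by (rule sum_cis2pi_multiples[OF assms])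
  finally show ?thesis using assms by (cases "l dvd k") simp_all
qed

lemma sum_abs_vino_coeff:
  assumes "2 \<le> l"
  shows "(\<Sum>s<l. \<bar>vino_coeff l s\<bar>) = 2 * (1 - 1 / real l)"
proof -
  obtain l' where l: "l = Suc l'" using assms by (cases l) auto
  have "(\<Sum>s<l. \<bar>vino_coeff l s\<bar>) = (1 - 1 / real l) + real (l - 1) * (1 / real l)"
    using assms unfolding l sum.lessThan_Suc_shift by (simp add: vino_coeff_def)
  also have "\<dots> = 2 * (1 - 1 / real l)"
    using assms by (simp add: of_nat_diff field_simps)
  finally show ?thesis .
qed

lemma tau_factor_identity:
  fixes x :: real
  assumes "x \<noteq> 0" "x \<noteq> 1"
  shows "(1 - 1 / x) ^ 4 + (x - 1) * (1 / x) ^ 4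
    = (1 - 1 / x) ^ 3 * (1 - 1 / (x - 1) + 1 / (x - 1) ^ 2)"
proof -
  have x1: "x - 1 \<noteq> 0" using assms by simp
  have a: "1 - 1 / x = (x - 1) / x"
    using assms by (simp add: field_simps)
  have "1 - 1 / y + 1 / y ^ 2 = (y\<^sup>2 - y + 1) / y\<^sup>2" if "y \<noteq> 0" for y :: real
    using that by (simp add: field_simps power2_eq_square)
  then have "1 - 1 / (x - 1) + 1 / (x - 1) ^ 2 = ((x - 1)\<^sup>2 - (x - 1) + 1) / (x - 1)\<^sup>2"
    using x1 by blast
  also have "(x - 1)\<^sup>2 - (x - 1) + 1 = x\<^sup>2 - 3 * x + 3"
    by (simp add: power2_eq_square algebra_simps)
  finally have b: "1 - 1 / (x - 1) + 1 / (x - 1) ^ 2 = (x\<^sup>2 - 3 * x + 3) / (x - 1)\<^sup>2" .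
  have c: "(x - 1) ^ 4 + (x - 1) = x * ((x - 1) * (x\<^sup>2 - 3 * x + 3))"
    by (simp add: power2_eq_square power4_eq_xxxx algebra_simps)
  have "(1 - 1 / x) ^ 4 + (x - 1) * (1 / x) ^ 4 = ((x - 1) ^ 4 + (x - 1)) / x ^ 4"
    unfolding a by (simp add: power_divide add_divide_distrib)
  also have "\<dots> = (x - 1) * (x\<^sup>2 - 3 * x + 3) / x ^ 3"
    unfolding c using assms by (simp add: power_eq_if)
  also have "\<dots> = ((x - 1) / x) ^ 3 * ((x\<^sup>2 - 3 * x + 3) / (x - 1)\<^sup>2)"
    using assms x1 by (simp add: power_divide power2_eq_square power3_eq_cube)
  finally show ?thesis unfolding a b .
qed

lemma sum_vino_coeff_power4:
  assumes "2 \<le> l"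
  shows "(\<Sum>s<l. vino_coeff l s ^ 4)
    = (1 - 1 / real l) ^ 3 * (1 - 1 / (real l - 1) + 1 / (real l - 1) ^ 2)"
proof -
  obtain l' where l: "l = Suc l'" using assms by (cases l) auto
  have "(\<Sum>s<l. vino_coeff l s ^ 4) = (1 - 1 / real l) ^ 4 + (real l - 1) * (1 / real l) ^ 4"
    using assms unfolding l sum.lessThan_Suc_shift by (simp add: vino_coeff_def)
  also have "\<dots> = (1 - 1 / real l) ^ 3 * (1 - 1 / (real l - 1) + 1 / (real l - 1) ^ 2)"
    using assms by (intro tau_factor_identity) auto
  finally show ?thesis .
qed

lemma abs_vino_coeff_le:
  assumes "2 \<le> l"
  shows "\<bar>vino_coeff l s\<bar> \<le> 1 - 1 / real l"
proof -
  have "1 / real l \<le> 1 / 2" using assms by (simp add: field_simps)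
  then show ?thesis by (simp add: vino_coeff_def)
qed

lemma two_le_prime_factor: "l \<in> prime_factors (n::nat) \<Longrightarrow> 2 \<le> l"
  by (simp add: in_prime_factors_iff prime_ge_2_nat)

lemma theta_nat_eq_prod:
  "n > 0 \<Longrightarrow> theta_nat n = (\<Prod>l\<in>prime_factors n. 1 - 1 / real l)"
  using totient_formula2[of n] by (simp add: theta_nat_def)

context discrete_log
begin

text \<open>Expanding the product over \<open>l \<in> prime_factors m\<close> of the previous identity, applied to
  \<open>k = dlog x\<close>, gives a sum indexed by tuples \<open>t\<close> with \<open>t l < l\<close>; the tuple \<open>t\<close> contributes the
  character \<open>mchar (vindex t)\<close> with weight \<open>vweight t\<close>.\<close>

definition vtuples :: "(nat \<Rightarrow> nat) set" where
  "vtuples = PiE (prime_factors m) (\<lambda>l. {..<l})"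

definition vweight :: "(nat \<Rightarrow> nat) \<Rightarrow> real" where
  "vweight t = (\<Prod>l\<in>prime_factors m. vino_coeff l (t l))"

definition vindex :: "(nat \<Rightarrow> nat) \<Rightarrow> nat" where
  "vindex t = (\<Sum>l\<in>prime_factors m. (m div l) * t l)"

lemma finite_vtuples: "finite vtuples"
  unfolding vtuples_def by (intro finite_PiE) auto

lemma sum_prime_factor_fractions:
  "(\<Sum>l\<in>prime_factors m. real (t l) * k / real l) = real (vindex t) * k / real m"
proof -
  have "(\<Sum>l\<in>prime_factors m. real (t l) * k / real l)
      = (\<Sum>l\<in>prime_factors m. real (m div l) * real (t l) * k / real m)"
  proof (intro sum.cong refl)
    fix l assume l: "l \<in> prime_factors m"
    then have "real (m div l) = real m / real l"
      by (intro real_of_nat_div) (simp add: in_prime_factors_iff)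
    then show "real (t l) * k / real l = real (m div l) * real (t l) * k / real m"
      using m_pos two_le_prime_factor[OF l] by (simp add: field_simps)
  qed
  also have "\<dots> = real (vindex t) * k / real m"
    unfolding vindex_def of_nat_sum of_nat_mult sum_divide_distrib sum_distrib_right ..
  finally show ?thesis .
qed

lemma of_bool_primitive_elem_eq_sum:
  assumes "x \<noteq> 0"
  shows "(of_bool (primitive_elem x) :: complex)
    = (\<Sum>t\<in>vtuples. of_real (vweight t) * mchar (int (vindex t)) x)"
proof -
  let ?P = "prime_factors m"
  let ?k = "dlog x"
  let ?e = "\<lambda>l s. cis2pi (real s * of_int (int ?k) / real l)"
  have "(of_bool (primitive_elem x) :: complex) = of_bool (\<forall>l\<in>?P. \<not> l dvd ?k)"
    using assms m_pos by (simp add: primitive_elem_iff_coprime_dlog coprime_iff_no_prime_factor_dvd)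
  also have "\<dots> = (\<Prod>l\<in>?P. 1 - of_bool (l dvd ?k))"
    by (rule of_bool_ball_not_eq_prod) simp
  also have "\<dots> = (\<Prod>l\<in>?P. \<Sum>s<l. of_real (vino_coeff l s) * ?e l s)"
    by (intro prod.cong refl one_minus_dvd_eq_sum_cis2pi) (auto dest: two_le_prime_factor)
  also have "\<dots> = (\<Sum>t\<in>vtuples. \<Prod>l\<in>?P. of_real (vino_coeff l (t l)) * ?e l (t l))"
    unfolding vtuples_def by (rule prod_sum_PiE) auto
  also have "\<dots> = (\<Sum>t\<in>vtuples. of_real (vweight t) * mchar (int (vindex t)) x)"
    by (simp only: prod.distrib vweight_def of_real_prod mchar_def cis2pi_sum[symmetric]
        sum_prime_factor_fractions of_int_of_nat_eq)
  finally show ?thesis .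
qed

lemma sum_abs_vweight:
  "(\<Sum>t\<in>vtuples. \<bar>vweight t\<bar>) = theta_nat m * 2 ^ card (prime_factors m)"
proof -
  have "(\<Sum>t\<in>vtuples. \<bar>vweight t\<bar>) = (\<Sum>t\<in>vtuples. \<Prod>l\<in>prime_factors m. \<bar>vino_coeff l (t l)\<bar>)"
    by (simp add: vweight_def abs_prod)
  also have "\<dots> = (\<Prod>l\<in>prime_factors m. \<Sum>s<l. \<bar>vino_coeff l s\<bar>)"
    unfolding vtuples_def by (rule prod_sum_PiE[symmetric]) auto
  also have "\<dots> = (\<Prod>l\<in>prime_factors m. 2 * (1 - 1 / real l))"
    by (intro prod.cong refl sum_abs_vino_coeff two_le_prime_factor)
  also have "\<dots> = theta_nat m * 2 ^ card (prime_factors m)"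
    unfolding prod.distrib prod_constant theta_nat_eq_prod[OF m_pos] by (simp only: mult.commute)
  finally show ?thesis .
qed

lemma abs_vweight_le: "\<bar>vweight t\<bar> \<le> theta_nat m"
  unfolding vweight_def theta_nat_eq_prod[OF m_pos] abs_prod
  by (intro prod_mono) (auto dest: two_le_prime_factor intro: abs_vino_coeff_le)

lemma sum_vweight_power4:
  "(\<Sum>t\<in>vtuples. vweight t ^ 4) = theta_nat m ^ 3 * tau_nat m"
proof -
  have "(\<Sum>t\<in>vtuples. vweight t ^ 4) = (\<Sum>t\<in>vtuples. \<Prod>l\<in>prime_factors m. vino_coeff l (t l) ^ 4)"
    by (simp add: vweight_def prod_power_distrib)
  also have "\<dots> = (\<Prod>l\<in>prime_factors m. \<Sum>s<l. vino_coeff l s ^ 4)"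
    unfolding vtuples_def by (rule prod_sum_PiE[symmetric]) auto
  also have "\<dots> = (\<Prod>l\<in>prime_factors m.
      (1 - 1 / real l) ^ 3 * (1 - 1 / (real l - 1) + 1 / (real l - 1) ^ 2))"
    by (intro prod.cong refl sum_vino_coeff_power4 two_le_prime_factor)
  also have "\<dots> = theta_nat m ^ 3 * tau_nat m"
    using m_pos by (simp add: prod.distrib theta_nat_eq_prod tau_nat_def prod_power_distrib)
  finally show ?thesis .
qed

end

lemma prime_factor_not_dvd_prod_others:
  assumes l0: "l0 \<in> prime_factors (m::nat)"
  shows "\<not> int l0 dvd (\<Prod>l\<in>prime_factors m - {l0}. int l)"
proof
  assume "int l0 dvd (\<Prod>l\<in>prime_factors m - {l0}. int l)"
  moreover have "prime (int l0)" using l0 by (simp add: in_prime_factors_iff)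
  ultimately obtain l where l: "l \<in> prime_factors m - {l0}" "int l0 dvd int l"
    by (subst (asm) prime_dvd_prod_iff) auto
  then have "l0 = l"
    using l0 by (simp add: in_prime_factors_iff primes_dvd_imp_eq)
  then show False using l(1) by simp
qed

text \<open>Multiplying by the product \<open>Q\<close> of the other prime factors kills all terms but the
  \<open>l\<^sub>0\<close>-th modulo \<open>m\<close>; as \<open>l\<^sub>0\<close> does not divide \<open>Q\<close>, it must divide \<open>d l\<^sub>0\<close>.\<close>

lemma prime_factor_dvd_coefficient:
  fixes m :: nat and d :: "nat \<Rightarrow> int"
  assumes m: "m > 0" and l0: "l0 \<in> prime_factors m"
    and dvd_weighted_sum: "int m dvd (\<Sum>l\<in>prime_factors m. int (m div l) * d l)"
  shows "int l0 dvd d l0"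
proof -
  let ?P = "prime_factors m"
  define Q where "Q = (\<Prod>l\<in>?P - {l0}. int l)"
  have m_div_mult: "int (m div l) * int l = int m" if "l \<in> ?P" for l
    using that by (metis dvd_mult_div_cancel in_prime_factors_iff mult.commute of_nat_mult)
  have term_dvd: "int m dvd Q * (int (m div l) * d l)" if "l \<in> ?P - {l0}" for l
  proof -
    have "int l dvd Q" unfolding Q_def using that by (intro dvd_prodI) auto
    then obtain r where "Q = int l * r" by (auto elim: dvdE)
    then have "Q * (int (m div l) * d l) = int m * (r * d l)"
      using m_div_mult[of l] that by (simp add: algebra_simps)
    then show ?thesis by (metis dvd_triv_left)
  qed
  have others: "int m dvd (\<Sum>l\<in>?P - {l0}. Q * (int (m div l) * d l))"
    by (intro dvd_sum term_dvd)
  have "Q * (\<Sum>l\<in>?P. int (m div l) * d l)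
      = Q * (int (m div l0) * d l0) + (\<Sum>l\<in>?P - {l0}. Q * (int (m div l) * d l))"
    unfolding sum_distrib_left using l0 by (simp add: sum.remove)
  moreover have "int m dvd Q * (\<Sum>l\<in>?P. int (m div l) * d l)"
    using dvd_weighted_sum by (rule dvd_mult)
  ultimately have "int m dvd Q * (int (m div l0) * d l0)"
    by (simp only: dvd_add_left_iff[OF others])
  then have "int (m div l0) * int l0 dvd int (m div l0) * (Q * d l0)"
    using m_div_mult[OF l0] by (simp add: algebra_simps)
  moreover have "int (m div l0) \<noteq> 0"
  proof
    assume "int (m div l0) = 0"
    then have "int m = 0" using m_div_mult[OF l0] by simp
    then show False using m by simp
  qed
  ultimately have "int l0 dvd Q * d l0" by simp
  moreover have "prime (int l0)" using l0 by (simp add: in_prime_factors_iff)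
  ultimately show ?thesis
    using prime_factor_not_dvd_prod_others[OF l0] by (simp add: Q_def prime_dvd_mult_iff)
qed

context discrete_log
begin

lemma vindex_inj_mod:
  assumes t: "t \<in> vtuples" and t': "t' \<in> vtuples"
    and dvd: "int m dvd int (vindex t) - int (vindex t')"
  shows "t = t'"
proof -
  have "t l = t' l" if l: "l \<in> prime_factors m" for l
  proof -
    have "int (vindex t) - int (vindex t') = (\<Sum>l\<in>prime_factors m. int (m div l) * (int (t l) - int (t' l)))"
      by (simp add: vindex_def sum_subtractf algebra_simps)
    then have l_dvd: "int l dvd int (t l) - int (t' l)"
      using prime_factor_dvd_coefficient[OF m_pos l, of "\<lambda>l. int (t l) - int (t' l)"] dvd by simp
    have "t l < l" "t' l < l" using t t' l by (auto simp: vtuples_def PiE_iff)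
    then have "\<bar>int (t l) - int (t' l)\<bar> < \<bar>int l\<bar>" by simp
    then have "int (t l) - int (t' l) = 0"
      using dvd_imp_le_int[OF _ l_dvd] by (meson not_le)
    then show ?thesis by simp
  qed
  then show ?thesis using t t' unfolding vtuples_def by (intro PiE_ext) auto
qed

definition vneg :: "(nat \<Rightarrow> nat) \<Rightarrow> nat \<Rightarrow> nat" where
  "vneg t = (\<lambda>l. if l \<in> prime_factors m then (l - t l) mod l else undefined)"

lemma vneg_in_vtuples: "t \<in> vtuples \<Longrightarrow> vneg t \<in> vtuples"
  unfolding vtuples_def vneg_def using two_le_prime_factor by (auto simp: PiE_iff extensional_def)

lemma vweight_vneg:
  assumes "t \<in> vtuples"
  shows "vweight (vneg t) = vweight t"
  unfolding vweight_def
proof (intro prod.cong refl)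
  fix l assume l: "l \<in> prime_factors m"
  then have "t l < l" using assms by (auto simp: vtuples_def PiE_iff)
  then have "(l - t l) mod l = 0 \<longleftrightarrow> t l = 0"
    by (cases "t l = 0") auto
  then show "vino_coeff l (vneg t l) = vino_coeff l (t l)"
    using l by (simp add: vneg_def vino_coeff_def)
qed

lemma vindex_add_vneg_dvd:
  assumes t: "t \<in> vtuples"
  shows "int m dvd int (vindex t) + int (vindex (vneg t))"
proof -
  have "vindex t + vindex (vneg t) = (\<Sum>l\<in>prime_factors m. m * of_bool (t l \<noteq> 0))"
    unfolding vindex_def sum.distrib[symmetric]
  proof (intro sum.cong refl)
    fix l assume l: "l \<in> prime_factors m"
    then have "t l < l" using t by (auto simp: vtuples_def PiE_iff)
    moreover have "m div l * l = m" using l by (simp add: in_prime_factors_iff)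
    ultimately show "m div l * t l + m div l * vneg t l = m * of_bool (t l \<noteq> 0)"
      using l by (cases "t l = 0") (simp_all add: vneg_def flip: add_mult_distrib2)
  qed
  then have "m dvd vindex t + vindex (vneg t)"
    by (simp add: dvd_sum)
  then show ?thesis by (metis int_dvd_int_iff of_nat_add)
qed

end

section \<open>Jacobi sums\<close>

definition jacobi_support :: "'a::field \<Rightarrow> 'a \<Rightarrow> 'a set" where
  "jacobi_support u v = {t. t \<noteq> 0 \<and> u + v * t \<noteq> 0}"

lemma card_jacobi_support:
  fixes u v :: "'a::{field,finite}"
  assumes "u \<noteq> 0" "v \<noteq> 0"
  shows "card (jacobi_support u v) = CARD('a) - 2"
proof -
  have "u + v * t = 0 \<longleftrightarrow> t = - u / v" for t
    using assms by (auto simp: field_simps add_eq_0_iff)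
  then have "jacobi_support u v = UNIV - {0, - u / v}"
    unfolding jacobi_support_def by auto
  moreover have "card {0, - u / v} = 2" using assms by simp
  ultimately show ?thesis by (simp add: card_Diff_subset)
qed

text \<open>The map \<open>(s, t) \<mapsto> (s / t, (u + v s) / (u + v t))\<close> is a bijection from the off-diagonal
  pairs of \<open>jacobi_support u v\<close> onto the off-diagonal pairs of \<open>F - {0, 1}\<close>; the inverse sends
  \<open>(x, y)\<close> to \<open>(x r, r)\<close> with \<open>r = u (y - 1) / (v (x - y))\<close>.\<close>

lemma ratio_pair_left_inverse:
  fixes u v s t :: "'a::field"
  assumes "u \<noteq> 0" "v \<noteq> 0" "s \<noteq> 0" "t \<noteq> 0" "u + v * s \<noteq> 0" "u + v * t \<noteq> 0" "s \<noteq> t"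
  defines "x \<equiv> s / t" and "y \<equiv> (u + v * s) / (u + v * t)"
  shows "x \<noteq> 0" "x \<noteq> 1" "y \<noteq> 0" "y \<noteq> 1" "x \<noteq> y"
    and "x * (u * (y - 1) / (v * (x - y))) = s" "u * (y - 1) / (v * (x - y)) = t"
proof -
  have st: "s - t \<noteq> 0" using assms by simp
  have y1: "y - 1 = v * (s - t) / (u + v * t)"
    unfolding y_def using assms by (simp add: field_simps)
  have xy: "x - y = u * (s - t) / (t * (u + v * t))"
    unfolding x_def y_def using assms by (simp add: field_simps)
  show "x \<noteq> 0" "y \<noteq> 0" "x \<noteq> 1" using assms by (simp_all add: x_def y_def)
  show "y \<noteq> 1" using y1 assms st by auto
  show "x \<noteq> y" using xy assms st by auto
  have "u * (v * K / D) / (v * (u * K / (t * D))) = t" if "K \<noteq> 0" "D \<noteq> 0" for K D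
    using that assms by (simp add: field_simps)
  then show r: "u * (y - 1) / (v * (x - y)) = t"
    unfolding y1 xy using assms st by simp
  show "x * (u * (y - 1) / (v * (x - y))) = s"
    unfolding r unfolding x_def using \<open>t \<noteq> 0\<close> by simp
qed

lemma ratio_pair_right_inverse:
  fixes u v x y :: "'a::field"
  assumes "u \<noteq> 0" "v \<noteq> 0" "x \<noteq> 0" "x \<noteq> 1" "y \<noteq> 0" "y \<noteq> 1" "x \<noteq> y"
  defines "r \<equiv> u * (y - 1) / (v * (x - y))"
  shows "r \<noteq> 0" "x * r \<noteq> 0" "u + v * r \<noteq> 0" "u + v * (x * r) \<noteq> 0" "x * r \<noteq> r"
    and "x * r / r = x" "(u + v * (x * r)) / (u + v * r) = y"
proof -
  have nz: "x - y \<noteq> 0" "y - 1 \<noteq> 0" "x - 1 \<noteq> 0" using assms by auto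
  have a: "u + v * r = u * (x - 1) / (x - y)"
    unfolding r_def using assms nz by (simp add: field_simps)
  have b: "u + v * (x * r) = u * y * (x - 1) / (x - y)"
    unfolding r_def using assms nz by (simp add: field_simps)
  show r0: "r \<noteq> 0" unfolding r_def using assms nz by simp
  show "x * r \<noteq> 0" "x * r \<noteq> r" "x * r / r = x" using r0 assms by simp_all
  show "u + v * r \<noteq> 0" "u + v * (x * r) \<noteq> 0" unfolding a b using assms nz by simp_all
  have "(u * y * K1 / K2) / (u * K1 / K2) = y" if "K1 \<noteq> 0" "K2 \<noteq> 0" for K1 K2
    using that assms by (simp add: field_simps)
  then show "(u + v * (x * r)) / (u + v * r) = y"
    unfolding a b using assms nz by simp
qed

lemma sum_ratio_pairs:
  fixes u v :: "'a::{field,finite}" and f :: "'a \<Rightarrow> 'a \<Rightarrow> 'b::comm_monoid_add"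
  assumes u: "u \<noteq> 0" and v: "v \<noteq> 0"
  defines "T \<equiv> jacobi_support u v" and "G \<equiv> UNIV - {0, 1::'a}"
  shows "(\<Sum>p\<in>{p\<in>T \<times> T. fst p \<noteq> snd p}. f (fst p / snd p) ((u + v * fst p) / (u + v * snd p)))
    = (\<Sum>p\<in>{p\<in>G \<times> G. fst p \<noteq> snd p}. f (fst p) (snd p))"
proof (rule sum.reindex_bij_witness[where j = "\<lambda>(s, t). (s / t, (u + v * s) / (u + v * t))"
      and i = "\<lambda>(x, y). (x * (u * (y - 1) / (v * (x - y))), u * (y - 1) / (v * (x - y)))"])
  fix a assume "a \<in> {p\<in>T \<times> T. fst p \<noteq> snd p}"
  then obtain s t where a: "a = (s, t)" "s \<noteq> 0" "t \<noteq> 0" "u + v * s \<noteq> 0" "u + v * t \<noteq> 0" "s \<noteq> t"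
    unfolding T_def jacobi_support_def by (cases a) auto
  note props = ratio_pair_left_inverse[OF u v a(2-6)]
  show "(case case a of (s, t) \<Rightarrow> (s / t, (u + v * s) / (u + v * t)) of
      (x, y) \<Rightarrow> (x * (u * (y - 1) / (v * (x - y))), u * (y - 1) / (v * (x - y)))) = a"
    using a(3) by (simp only: a(1) prod.case props(7)) simp
  show "(case a of (s, t) \<Rightarrow> (s / t, (u + v * s) / (u + v * t))) \<in> {p\<in>G \<times> G. fst p \<noteq> snd p}"
    using props by (simp add: a(1) G_def)
  show "f (fst (case a of (s, t) \<Rightarrow> (s / t, (u + v * s) / (u + v * t))))
      (snd (case a of (s, t) \<Rightarrow> (s / t, (u + v * s) / (u + v * t))))
    = f (fst a / snd a) ((u + v * fst a) / (u + v * snd a))"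
    by (simp add: a(1))
next
  fix b assume "b \<in> {p\<in>G \<times> G. fst p \<noteq> snd p}"
  then obtain x y where b: "b = (x, y)" "x \<noteq> 0" "x \<noteq> 1" "y \<noteq> 0" "y \<noteq> 1" "x \<noteq> y"
    unfolding G_def by (cases b) auto
  note props = ratio_pair_right_inverse[OF u v b(2-6)]
  show "(case case b of (x, y) \<Rightarrow> (x * (u * (y - 1) / (v * (x - y))), u * (y - 1) / (v * (x - y))) of
      (s, t) \<Rightarrow> (s / t, (u + v * s) / (u + v * t))) = b"
    using props by (simp add: b(1))
  show "(case b of (x, y) \<Rightarrow> (x * (u * (y - 1) / (v * (x - y))), u * (y - 1) / (v * (x - y))))
      \<in> {p\<in>T \<times> T. fst p \<noteq> snd p}"
    using props by (simp add: b(1) T_def jacobi_support_def)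
qed

lemma sum_square_split_diagonal:
  fixes f :: "'b \<Rightarrow> 'b \<Rightarrow> 'c::comm_monoid_add"
  assumes "finite A"
  shows "(\<Sum>p\<in>A \<times> A. f (fst p) (snd p))
    = (\<Sum>p\<in>{p\<in>A \<times> A. fst p \<noteq> snd p}. f (fst p) (snd p)) + (\<Sum>x\<in>A. f x x)"
proof -
  have "{p\<in>A \<times> A. fst p \<noteq> snd p} = A \<times> A - (\<lambda>x. (x, x)) ` A" by auto
  moreover have "(\<Sum>p\<in>A \<times> A. f (fst p) (snd p)) = (\<Sum>p\<in>A \<times> A - (\<lambda>x. (x, x)) ` A. f (fst p) (snd p))
      + (\<Sum>p\<in>(\<lambda>x. (x, x)) ` A. f (fst p) (snd p))"
    using assms by (intro sum.subset_diff) auto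
  moreover have "(\<Sum>p\<in>(\<lambda>x. (x, x)) ` A. f (fst p) (snd p)) = (\<Sum>x\<in>A. f x x)"
    by (subst sum.reindex) (auto simp: inj_on_def)
  ultimately show ?thesis by simp
qed

lemma sum_product_off_diagonal:
  fixes a b :: "'b \<Rightarrow> 'c::comm_ring"
  assumes "finite A"
  shows "(\<Sum>p\<in>{p\<in>A \<times> A. fst p \<noteq> snd p}. a (fst p) * b (snd p))
    = (\<Sum>x\<in>A. a x) * (\<Sum>y\<in>A. b y) - (\<Sum>x\<in>A. a x * b x)"
proof -
  have "(\<Sum>x\<in>A. a x) * (\<Sum>y\<in>A. b y) = (\<Sum>p\<in>A \<times> A. a (fst p) * b (snd p))"
    by (simp add: sum_product sum.cartesian_product case_prod_beta)
  also have "\<dots> = (\<Sum>p\<in>{p\<in>A \<times> A. fst p \<noteq> snd p}. a (fst p) * b (snd p)) + (\<Sum>x\<in>A. a x * b x)"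
    by (rule sum_square_split_diagonal[OF assms, of "\<lambda>x y. a x * b y"])
  finally show ?thesis by (simp add: algebra_simps)
qed

context discrete_log
begin

definition jacobi :: "'a \<Rightarrow> 'a \<Rightarrow> int \<Rightarrow> int \<Rightarrow> complex" where
  "jacobi u v B C = (\<Sum>t\<in>jacobi_support u v. mchar B t * mchar C (u + v * t))"

lemma jacobi_trivial:
  assumes "u \<noteq> 0" "v \<noteq> 0" "int m dvd B" "int m dvd C"
  shows "jacobi u v B C = of_nat (CARD('a) - 2)"
  using assms by (simp add: jacobi_def mchar_trivial card_jacobi_support)

lemma norm_jacobi_le:
  assumes "u \<noteq> 0" "v \<noteq> 0"
  shows "norm (jacobi u v B C) \<le> real (CARD('a) - 2)"
proof -
  have "norm (jacobi u v B C) \<le> (\<Sum>t\<in>jacobi_support u v. norm (mchar B t * mchar C (u + v * t)))"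
    unfolding jacobi_def by (rule norm_sum)
  also have "\<dots> = real (CARD('a) - 2)"
    using card_jacobi_support[OF assms] by (simp add: norm_mult)
  finally show ?thesis .
qed

lemma norm_jacobi_squared:
  assumes u: "u \<noteq> 0" and v: "v \<noteq> 0"
  defines "S n \<equiv> (\<Sum>x\<in>UNIV - {0, 1}. mchar n x)"
  shows "of_real (norm (jacobi u v B C) ^ 2) = S B * S C - S (B + C) + of_nat (CARD('a) - 2)"
proof -
  define T where "T = jacobi_support u v"
  define f where "f t = mchar B t * mchar C (u + v * t)" for t
  define h where "h s t = mchar B (s / t) * mchar C ((u + v * s) / (u + v * t))" for s t
  have T: "t \<in> T \<longleftrightarrow> t \<noteq> 0 \<and> u + v * t \<noteq> 0" for t
    by (simp add: T_def jacobi_support_def)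
  have "of_real (norm (jacobi u v B C) ^ 2) = (\<Sum>t\<in>T. f t) * cnj (\<Sum>t\<in>T. f t)"
    unfolding jacobi_def T_def f_def by (rule complex_norm_square)
  also have "\<dots> = (\<Sum>p\<in>T \<times> T. f (fst p) * cnj (f (snd p)))"
    by (simp add: sum_product sum.cartesian_product case_prod_beta)
  also have "\<dots> = (\<Sum>p\<in>T \<times> T. h (fst p) (snd p))"
    by (intro sum.cong refl) (auto simp: T f_def h_def mchar_divide mult_ac)
  also have "\<dots> = (\<Sum>p\<in>{p\<in>T \<times> T. fst p \<noteq> snd p}. h (fst p) (snd p)) + (\<Sum>t\<in>T. h t t)"
    by (rule sum_square_split_diagonal) simp
  also have "(\<Sum>t\<in>T. h t t) = (\<Sum>t\<in>T. 1)"
    by (intro sum.cong refl) (simp add: h_def T)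
  also have "\<dots> = of_nat (CARD('a) - 2)"
    using card_jacobi_support[OF u v] by (simp add: T_def)
  also have "(\<Sum>p\<in>{p\<in>T \<times> T. fst p \<noteq> snd p}. h (fst p) (snd p))
      = (\<Sum>p\<in>{p\<in>(UNIV - {0, 1}) \<times> (UNIV - {0, 1}). fst p \<noteq> snd p}. mchar B (fst p) * mchar C (snd p))"
    unfolding h_def T_def by (rule sum_ratio_pairs[OF u v])
  also have "\<dots> = S B * S C - S (B + C)"
    by (simp add: sum_product_off_diagonal S_def mchar_add)
  finally show ?thesis .
qed

lemma norm_jacobi_squared_le:
  assumes u: "u \<noteq> 0" and v: "v \<noteq> 0" and nontrivial: "\<not> (int m dvd B \<and> int m dvd C)"
  shows "norm (jacobi u v B C) ^ 2 \<le> real CARD('a)"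
proof -
  define s where "s n = (if int m dvd n then real m else 0) - 1" for n
  have "(\<Sum>x\<in>UNIV - {0, 1}. mchar n x) = of_real (s n)" for n
    by (simp add: sum_mchar_nonzero_nonone s_def)
  then have "(of_real (norm (jacobi u v B C) ^ 2) :: complex)
      = of_real (s B * s C - s (B + C) + real (CARD('a) - 2))"
    using norm_jacobi_squared[OF u v, of B C] by simp
  then have "norm (jacobi u v B C) ^ 2 = s B * s C - s (B + C) + real (CARD('a) - 2)"
    by (simp only: of_real_eq_iff)
  moreover have "real (CARD('a) - 2) = real m - 1"
    using m_eq m_pos by (simp add: of_nat_diff)
  ultimately have eq: "norm (jacobi u v B C) ^ 2 = s B * s C - s (B + C) + real m - 1"
    by simp
  have "s B * s C - s (B + C) \<le> 2"
    using nontrivial by (auto simp: s_def dvd_add_right_iff dvd_add_left_iff)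
  then show ?thesis using eq m_eq by simp
qed

end

section \<open>Counting \<open>(u, v)\<close>-primitive pairs\<close>

lemma of_nat_N_uv_eq_sum:
  fixes u v :: "'a::{field,finite}"
  shows "(of_nat (N_uv u v) :: 'b::comm_semiring_1)
    = (\<Sum>(x, y)\<in>{(x, y). x \<noteq> 0 \<and> y \<noteq> 0 \<and> u * x + v * y \<noteq> 0}.
        of_bool (primitive_elem x) * of_bool (primitive_elem y) * of_bool (primitive_elem (u * x + v * y))
        * of_bool (primitive_elem ((u * x + v * y) / (x * y))))"
proof -
  define Z where "Z = {(x, y). x \<noteq> 0 \<and> y \<noteq> 0 \<and> u * x + v * y \<noteq> (0::'a)}"
  have "{(x, y). uv_primitive u v x y} = Z \<inter> {p. uv_primitive u v (fst p) (snd p)}"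
    by (auto simp: Z_def uv_primitive_def primitive_elem_def)
  then have "(of_nat (N_uv u v) :: 'b) = (\<Sum>(x, y)\<in>Z. of_bool (uv_primitive u v x y))"
    by (simp add: N_uv_def sum.inter_filter case_prod_beta)
  also have "\<dots> = (\<Sum>(x, y)\<in>Z. of_bool (primitive_elem x) * of_bool (primitive_elem y)
      * of_bool (primitive_elem (u * x + v * y)) * of_bool (primitive_elem ((u * x + v * y) / (x * y))))"
  proof (intro sum.cong refl, clarify)
    fix x y assume "(x, y) \<in> Z"
    then have "v * inverse x + u * inverse y = (u * x + v * y) / (x * y)"
      by (simp add: Z_def field_simps)
    then show "of_bool (uv_primitive u v x y) = (of_bool (primitive_elem x) * of_bool (primitive_elem y)
        * of_bool (primitive_elem (u * x + v * y)) * of_bool (primitive_elem ((u * x + v * y) / (x * y))) :: 'b)"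
      by (simp add: uv_primitive_def)
  qed
  finally show ?thesis by (simp only: Z_def)
qed

lemma sum_substitute_multiple:
  fixes u v :: "'a::{field,finite}"
  shows "(\<Sum>(x, y)\<in>{(x, y). x \<noteq> 0 \<and> y \<noteq> 0 \<and> u * x + v * y \<noteq> 0}. f x y)
    = (\<Sum>(x, t)\<in>(UNIV - {0}) \<times> jacobi_support u v. f x (x * t))"
proof (rule sum.reindex_bij_witness[symmetric, where j = "\<lambda>(x, t). (x, x * t)"
      and i = "\<lambda>(x, y). (x, y / x)"])
  have sep: "u * x + v * (x * t) = x * (u + v * t)" for x t :: 'a
    by (simp add: algebra_simps)
  fix p :: "'a \<times> 'a" assume "p \<in> (UNIV - {0}) \<times> jacobi_support u v"
  then show "(case case p of (x, t) \<Rightarrow> (x, x * t) of (x, y) \<Rightarrow> (x, y / x)) = p"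
    and "(case p of (x, t) \<Rightarrow> (x, x * t)) \<in> {(x, y). x \<noteq> 0 \<and> y \<noteq> 0 \<and> u * x + v * y \<noteq> 0}"
    by (auto simp: jacobi_support_def sep)
next
  fix p :: "'a \<times> 'a" assume p: "p \<in> {(x, y). x \<noteq> 0 \<and> y \<noteq> 0 \<and> u * x + v * y \<noteq> 0}"
  then show "(case case p of (x, y) \<Rightarrow> (x, y / x) of (x, t) \<Rightarrow> (x, x * t)) = p"
    by auto
  have "u + v * (y / x) = (u * x + v * y) / x" if "x \<noteq> 0" for x y :: 'a
    using that by (simp add: field_simps)
  then show "(case p of (x, y) \<Rightarrow> (x, y / x)) \<in> (UNIV - {0}) \<times> jacobi_support u v"
    using p by (auto simp: jacobi_support_def)
qed (auto simp: case_prod_beta)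

lemma prod_four_sums:
  fixes f1 f2 f3 f4 :: "'b \<Rightarrow> 'c::comm_semiring_1"
  shows "(\<Sum>x\<in>A. f1 x) * (\<Sum>x\<in>A. f2 x) * (\<Sum>x\<in>A. f3 x) * (\<Sum>x\<in>A. f4 x)
    = (\<Sum>(a, b, c, d)\<in>A \<times> A \<times> A \<times> A. f1 a * f2 b * f3 c * f4 d)"
proof -
  have pair: "(\<Sum>x\<in>A. f x) * (\<Sum>p\<in>B. g p) = (\<Sum>(x, p)\<in>A \<times> B. f x * g p)"
    for f :: "'b \<Rightarrow> 'c" and g :: "'d \<Rightarrow> 'c" and B
    by (simp add: sum_product sum.cartesian_product)
  have "(\<Sum>x\<in>A. f1 x) * (\<Sum>x\<in>A. f2 x) * (\<Sum>x\<in>A. f3 x) * (\<Sum>x\<in>A. f4 x)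
      = (\<Sum>x\<in>A. f1 x) * ((\<Sum>x\<in>A. f2 x) * ((\<Sum>x\<in>A. f3 x) * (\<Sum>x\<in>A. f4 x)))"
    by (simp only: mult.assoc)
  also have "\<dots> = (\<Sum>(a, b, c, d)\<in>A \<times> A \<times> A \<times> A. f1 a * (f2 b * (f3 c * f4 d)))"
    unfolding pair by (simp add: case_prod_beta)
  finally show ?thesis by (simp only: mult.assoc)
qed

context discrete_log
begin

lemma mchar_four_product:
  assumes "x \<noteq> 0" "t \<noteq> 0" "u + v * t \<noteq> 0"
  shows "mchar n1 x * mchar n2 (x * t) * mchar n3 (u * x + v * (x * t))
      * mchar n4 ((u * x + v * (x * t)) / (x * (x * t)))
    = mchar (n1 + n2 + n3 - n4) x * (mchar (n2 - n4) t * mchar (n3 + n4) (u + v * t))"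
proof -
  have sep: "u * x + v * (x * t) = x * (u + v * t)"
    by (simp add: algebra_simps)
  have quot: "x * (u + v * t) / (x * (x * t)) = (u + v * t) / (x * t)"
    using assms by simp
  have "mchar n1 x * mchar n2 (x * t) * mchar n3 (u * x + v * (x * t))
      * mchar n4 ((u * x + v * (x * t)) / (x * (x * t)))
    = mchar n1 x * (mchar n2 x * mchar n2 t) * (mchar n3 x * mchar n3 (u + v * t))
      * (mchar n4 (u + v * t) * (mchar (- n4) x * mchar (- n4) t))"
    unfolding sep quot using assms
    by (simp add: mchar_mult mchar_divide mchar_uminus mult_ac)
  also have "\<dots> = mchar (n1 + n2 + n3 - n4) x * (mchar (n2 - n4) t * mchar (n3 + n4) (u + v * t))"
    by (simp only: diff_conv_add_uminus mchar_add mult_ac)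
  finally show ?thesis .
qed

text \<open>Substituting \<open>y = x t\<close> separates the variables: the \<open>x\<close>-sum is a complete character sum
  and the \<open>t\<close>-sum a Jacobi sum.\<close>

lemma sum_four_mchars:
  assumes u: "u \<noteq> 0" and v: "v \<noteq> 0"
  shows "(\<Sum>(x, y)\<in>{(x, y). x \<noteq> 0 \<and> y \<noteq> 0 \<and> u * x + v * y \<noteq> 0}.
           mchar n1 x * mchar n2 y * mchar n3 (u * x + v * y) * mchar n4 ((u * x + v * y) / (x * y)))
       = (if int m dvd n1 + n2 + n3 - n4 then of_nat m else 0) * jacobi u v (n2 - n4) (n3 + n4)"
proof -
  let ?T = "jacobi_support u v"
  have "(\<Sum>(x, y)\<in>{(x, y). x \<noteq> 0 \<and> y \<noteq> 0 \<and> u * x + v * y \<noteq> 0}.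
           mchar n1 x * mchar n2 y * mchar n3 (u * x + v * y) * mchar n4 ((u * x + v * y) / (x * y)))
      = (\<Sum>(x, t)\<in>(UNIV - {0}) \<times> ?T.
          mchar (n1 + n2 + n3 - n4) x * (mchar (n2 - n4) t * mchar (n3 + n4) (u + v * t)))"
    unfolding sum_substitute_multiple
  proof (intro sum.cong refl)
    fix p :: "'a \<times> 'a" assume "p \<in> (UNIV - {0}) \<times> ?T"
    then obtain x t where "p = (x, t)" "x \<noteq> 0" "t \<noteq> 0" "u + v * t \<noteq> 0"
      by (cases p) (auto simp: jacobi_support_def)
    then show "(case p of (x, t) \<Rightarrow> mchar n1 x * mchar n2 (x * t) * mchar n3 (u * x + v * (x * t))
          * mchar n4 ((u * x + v * (x * t)) / (x * (x * t))))
        = (case p of (x, t) \<Rightarrow>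
          mchar (n1 + n2 + n3 - n4) x * (mchar (n2 - n4) t * mchar (n3 + n4) (u + v * t)))"
      using mchar_four_product by simp
  qed
  also have "\<dots> = (\<Sum>x\<in>UNIV - {0}. mchar (n1 + n2 + n3 - n4) x)
      * (\<Sum>t\<in>?T. mchar (n2 - n4) t * mchar (n3 + n4) (u + v * t))"
    by (simp add: sum_product sum.cartesian_product)
  also have "\<dots> = (if int m dvd n1 + n2 + n3 - n4 then of_nat m else 0) * jacobi u v (n2 - n4) (n3 + n4)"
    by (simp add: sum_mchar jacobi_def)
  finally show ?thesis .
qed

end

type_synonym vquad = "(nat \<Rightarrow> nat) \<times> (nat \<Rightarrow> nat) \<times> (nat \<Rightarrow> nat) \<times> (nat \<Rightarrow> nat)"

context discrete_log
begin

text \<open>Expanding each of the four primitivity conditions by Vinogradov's formula, a quadruple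
  \<open>(a, b, c, d)\<close> of tuples indexes one term of the expansion of \<open>N(q, u, v)\<close>; the complete
  character sum in that term vanishes unless the quadruple is \<open>resonant\<close>.\<close>

definition vquads :: "vquad set" where
  "vquads = vtuples \<times> vtuples \<times> vtuples \<times> vtuples"

fun qweight :: "vquad \<Rightarrow> real" where
  "qweight (a, b, c, d) = vweight a * vweight b * vweight c * vweight d"

fun resonant :: "vquad \<Rightarrow> bool" where
  "resonant (a, b, c, d) \<longleftrightarrow>
     int m dvd int (vindex a) + int (vindex b) + int (vindex c) - int (vindex d)"

fun qjacobi :: "'a \<Rightarrow> 'a \<Rightarrow> vquad \<Rightarrow> complex" where
  "qjacobi u v (a, b, c, d) =
     jacobi u v (int (vindex b) - int (vindex d)) (int (vindex c) + int (vindex d))"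

definition qterm :: "'a \<Rightarrow> 'a \<Rightarrow> vquad \<Rightarrow> complex" where
  "qterm u v q = (if resonant q then of_nat m else 0) * qjacobi u v q"

lemma finite_vquads: "finite vquads"
  by (simp add: vquads_def finite_vtuples)

lemma N_uv_expansion:
  assumes u: "u \<noteq> 0" and v: "v \<noteq> 0"
  shows "(of_nat (N_uv u v) :: complex) = (\<Sum>q\<in>vquads. of_real (qweight q) * qterm u v q)"
proof -
  define Z where "Z = {(x, y). x \<noteq> 0 \<and> y \<noteq> 0 \<and> u * x + v * y \<noteq> (0::'a)}"
  define X where "X q x y = (case q of (a, b, c, d) \<Rightarrow>
      mchar (int (vindex a)) x * mchar (int (vindex b)) y * mchar (int (vindex c)) (u * x + v * y)
      * mchar (int (vindex d)) ((u * x + v * y) / (x * y)))" for q and x y :: 'a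
  have "(of_nat (N_uv u v) :: complex) = (\<Sum>(x, y)\<in>Z. \<Sum>q\<in>vquads. of_real (qweight q) * X q x y)"
    unfolding of_nat_N_uv_eq_sum Z_def[symmetric]
  proof (intro sum.cong refl, clarify)
    fix x y assume "(x, y) \<in> Z"
    then have nz: "x \<noteq> 0" "y \<noteq> 0" "u * x + v * y \<noteq> 0" "(u * x + v * y) / (x * y) \<noteq> 0"
      by (auto simp: Z_def)
    show "of_bool (primitive_elem x) * of_bool (primitive_elem y) * of_bool (primitive_elem (u * x + v * y))
        * of_bool (primitive_elem ((u * x + v * y) / (x * y)))
        = (\<Sum>q\<in>vquads. of_real (qweight q) * X q x y)"
      unfolding of_bool_primitive_elem_eq_sum[OF nz(1)] of_bool_primitive_elem_eq_sum[OF nz(2)]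
        of_bool_primitive_elem_eq_sum[OF nz(3)] of_bool_primitive_elem_eq_sum[OF nz(4)]
        prod_four_sums vquads_def
      by (intro sum.cong refl) (auto simp: X_def mult_ac)
  qed
  also have "\<dots> = (\<Sum>q\<in>vquads. of_real (qweight q) * (\<Sum>(x, y)\<in>Z. X q x y))"
    unfolding case_prod_beta sum_distrib_left by (rule sum.swap)
  also have "\<dots> = (\<Sum>q\<in>vquads. of_real (qweight q) * qterm u v q)"
  proof (intro sum.cong refl)
    fix q :: vquad
    obtain a b c d where "q = (a, b, c, d)" by (cases q) auto
    then show "of_real (qweight q) * (\<Sum>(x, y)\<in>Z. X q x y) = of_real (qweight q) * qterm u v q"
      using sum_four_mchars[OF u v] by (simp add: X_def Z_def qterm_def)
  qed
  finally show ?thesis .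
qed

text \<open>The main term of \<open>N(q, u, v)\<close> comes from the quadruples \<open>(t, t, -t, t)\<close>, for which the
  Jacobi sum is trivial; every other resonant quadruple has a nontrivial Jacobi sum.\<close>

definition vdiag :: "(nat \<Rightarrow> nat) \<Rightarrow> vquad" where
  "vdiag t = (t, t, vneg t, t)"

definition vdiagonal :: "vquad set" where
  "vdiagonal = vdiag ` vtuples"

lemma vdiagonal_subset: "vdiagonal \<subseteq> vquads"
  by (auto simp: vdiagonal_def vdiag_def vquads_def vneg_in_vtuples)

lemma resonant_vdiag: "t \<in> vtuples \<Longrightarrow> resonant (vdiag t)"
  using vindex_add_vneg_dvd[of t] by (simp add: vdiag_def)

lemma qjacobi_vdiag:
  assumes "u \<noteq> 0" "v \<noteq> 0" "t \<in> vtuples"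
  shows "qjacobi u v (vdiag t) = of_nat (CARD('a) - 2)"
  using assms vindex_add_vneg_dvd[OF assms(3)]
  by (simp add: vdiag_def jacobi_trivial add.commute)

lemma qweight_vdiag: "t \<in> vtuples \<Longrightarrow> qweight (vdiag t) = vweight t ^ 4"
  by (simp add: vdiag_def vweight_vneg power4_eq_xxxx)

lemma sum_qweight_vdiagonal: "(\<Sum>q\<in>vdiagonal. qweight q) = theta_nat m ^ 3 * tau_nat m"
proof -
  have "inj_on vdiag vtuples" by (auto simp: inj_on_def vdiag_def)
  then have "(\<Sum>q\<in>vdiagonal. qweight q) = (\<Sum>t\<in>vtuples. qweight (vdiag t))"
    unfolding vdiagonal_def by (simp add: sum.reindex)
  also have "\<dots> = (\<Sum>t\<in>vtuples. vweight t ^ 4)"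
    by (intro sum.cong refl qweight_vdiag)
  finally show ?thesis using sum_vweight_power4 by simp
qed

lemma trivial_qjacobi_imp_vdiagonal:
  assumes q: "q \<in> vquads" and "resonant q"
    and "q = (a, b, c, d)"
    and bd: "int m dvd int (vindex b) - int (vindex d)"
    and cd: "int m dvd int (vindex c) + int (vindex d)"
  shows "q \<in> vdiagonal"
proof -
  have in_vtuples: "a \<in> vtuples" "b \<in> vtuples" "c \<in> vtuples" "d \<in> vtuples"
    using q assms(3) by (auto simp: vquads_def)
  have "b = d" using vindex_inj_mod[OF in_vtuples(2,4) bd] .
  have "int m dvd (int (vindex c) + int (vindex d)) - (int (vindex d) + int (vindex (vneg d)))"
    using dvd_diff[OF cd vindex_add_vneg_dvd[OF in_vtuples(4)]] .
  then have "c = vneg d"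
    using vindex_inj_mod[OF in_vtuples(3) vneg_in_vtuples[OF in_vtuples(4)]] by simp
  have "int m dvd int (vindex a) + int (vindex b) + int (vindex c) - int (vindex d)"
    using \<open>resonant q\<close> assms(3) by simp
  then have "int m dvd (int (vindex a) + int (vindex b) + int (vindex c) - int (vindex d))
      - (int (vindex b) - int (vindex d)) - (int (vindex c) + int (vindex d))"
    using bd cd by (blast intro: dvd_diff)
  then have "int m dvd int (vindex a) - int (vindex d)" by (simp add: algebra_simps)
  then have "a = d" using vindex_inj_mod[OF in_vtuples(1,4)] by simp
  show ?thesis
    using \<open>a = d\<close> \<open>b = d\<close> \<open>c = vneg d\<close> assms(3) in_vtuples(4)
    by (auto simp: vdiagonal_def vdiag_def)
qed

lemma qterm_vdiagonal:
  assumes "u \<noteq> 0" "v \<noteq> 0" "q \<in> vdiagonal"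
  shows "qterm u v q = of_nat (m * (CARD('a) - 2))"
proof -
  obtain t where "t \<in> vtuples" "q = vdiag t"
    using assms(3) unfolding vdiagonal_def by blast
  then show ?thesis
    using assms by (simp add: qterm_def resonant_vdiag qjacobi_vdiag)
qed

lemma norm_qterm_off_vdiagonal:
  assumes u: "u \<noteq> 0" and v: "v \<noteq> 0" and q: "q \<in> vquads - vdiagonal"
  shows "norm (qterm u v q)
    \<le> real m * min (sqrt (real CARD('a))) (real CARD('a) - 2) * of_bool (resonant q)"
proof (cases "resonant q")
  case True
  obtain a b c d where abcd: "q = (a, b, c, d)" by (cases q) auto
  let ?B = "int (vindex b) - int (vindex d)" and ?C = "int (vindex c) + int (vindex d)"
  have "\<not> (int m dvd ?B \<and> int m dvd ?C)"
    using trivial_qjacobi_imp_vdiagonal[OF _ True abcd] q by blast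
  then have "norm (jacobi u v ?B ?C) \<le> sqrt (real CARD('a))"
    using norm_jacobi_squared_le[OF u v] by (simp add: real_le_rsqrt)
  moreover have "norm (jacobi u v ?B ?C) \<le> real CARD('a) - 2"
    using norm_jacobi_le[OF u v, of ?B ?C] m_eq m_pos by (simp add: of_nat_diff)
  ultimately show ?thesis
    using True by (simp add: qterm_def abcd norm_mult mult_left_mono)
qed (simp add: qterm_def)

lemma sum_abs_vweight_dvd_le:
  "(\<Sum>t\<in>vtuples. \<bar>vweight t\<bar> * of_bool (int m dvd int (vindex t) + K)) \<le> theta_nat m"
proof -
  define A where "A = {t\<in>vtuples. int m dvd int (vindex t) + K}"
  have "(\<Sum>t\<in>vtuples. \<bar>vweight t\<bar> * of_bool (int m dvd int (vindex t) + K)) = (\<Sum>t\<in>A. \<bar>vweight t\<bar>)"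
    unfolding A_def sum.inter_filter[OF finite_vtuples] by (intro sum.cong refl) simp
  also have "\<dots> \<le> theta_nat m"
  proof (cases "A = {}")
    case True
    then show ?thesis using abs_vweight_le[of undefined] by simp
  next
    case False
    then obtain t0 where t0: "t0 \<in> A" by blast
    have "A = {t0}"
    proof (intro equalityI subsetI)
      fix t assume t: "t \<in> A"
      have "int m dvd (int (vindex t) + K) - (int (vindex t0) + K)"
        using t t0 unfolding A_def by (intro dvd_diff) auto
      then show "t \<in> {t0}" using vindex_inj_mod t t0 unfolding A_def by auto
    qed (use t0 in auto)
    then show ?thesis using abs_vweight_le by simp
  qed
  finally show ?thesis .
qed

lemma sum_abs_qweight_resonant_le:
  "(\<Sum>q\<in>vquads. \<bar>qweight q\<bar> * of_bool (resonant q)) \<le> theta_nat m ^ 4 * (2 ^ card (prime_factors m)) ^ 3"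
proof -
  let ?K = "\<lambda>a b c. int (vindex a) + int (vindex b) + int (vindex c)"
  have "(\<Sum>q\<in>vquads. \<bar>qweight q\<bar> * of_bool (resonant q))
      = (\<Sum>a\<in>vtuples. \<Sum>b\<in>vtuples. \<Sum>c\<in>vtuples. \<bar>vweight a\<bar> * \<bar>vweight b\<bar> * \<bar>vweight c\<bar> *
          (\<Sum>d\<in>vtuples. \<bar>vweight d\<bar> * of_bool (int m dvd int (vindex d) + - ?K a b c)))"
  proof -
    have iff: "int m dvd ?K a b c - int (vindex d) \<longleftrightarrow> int m dvd int (vindex d) + - ?K a b c"
      for a b c d
      by (metis dvd_minus_iff minus_diff_eq uminus_add_conv_diff add.commute)
    have "(\<Sum>q\<in>vquads. \<bar>qweight q\<bar> * of_bool (resonant q))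
        = (\<Sum>(a, b, c, d)\<in>vquads. \<bar>vweight a\<bar> * \<bar>vweight b\<bar> * \<bar>vweight c\<bar> *
            (\<bar>vweight d\<bar> * of_bool (int m dvd int (vindex d) + - ?K a b c)))"
    proof (intro sum.cong refl)
      fix q :: vquad
      obtain a b c d where "q = (a, b, c, d)" by (cases q) auto
      then show "\<bar>qweight q\<bar> * of_bool (resonant q) = (case q of (a, b, c, d) \<Rightarrow>
          \<bar>vweight a\<bar> * \<bar>vweight b\<bar> * \<bar>vweight c\<bar> *
            (\<bar>vweight d\<bar> * of_bool (int m dvd int (vindex d) + - ?K a b c)))"
        using iff by (simp add: abs_mult mult_ac)
    qed
    then show ?thesis
      by (simp add: vquads_def sum.cartesian_product sum_distrib_left)
  qed
  also have "\<dots> \<le> (\<Sum>a\<in>vtuples. \<Sum>b\<in>vtuples. \<Sum>c\<in>vtuples.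
      \<bar>vweight a\<bar> * \<bar>vweight b\<bar> * \<bar>vweight c\<bar> * theta_nat m)"
    by (intro sum_mono mult_left_mono sum_abs_vweight_dvd_le) auto
  also have "\<dots> = theta_nat m * (\<Sum>t\<in>vtuples. \<bar>vweight t\<bar>) ^ 3"
    by (simp add: sum_distrib_left sum_distrib_right power3_eq_cube mult_ac)
  also have "\<dots> = theta_nat m ^ 4 * (2 ^ card (prime_factors m)) ^ 3"
    by (simp add: sum_abs_vweight power_mult_distrib power4_eq_xxxx power3_eq_cube)
  finally show ?thesis .
qed

lemma main_term_le:
  assumes "CARD('a) > 2"
  shows "theta_nat m ^ 3 * tau_nat m \<le> theta_nat m ^ 4 * (2 ^ card (prime_factors m)) ^ 3 / 4"
proof -
  let ?W = "(2::real) ^ card (prime_factors m)"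
  have "theta_nat m \<ge> 0" by (simp add: theta_nat_def)
  have "(\<Sum>t\<in>vtuples. vweight t ^ 4) \<le> (\<Sum>t\<in>vtuples. theta_nat m ^ 3 * \<bar>vweight t\<bar>)"
  proof (intro sum_mono)
    fix t
    have "vweight t ^ 4 = \<bar>vweight t\<bar> ^ 3 * \<bar>vweight t\<bar>"
      by (simp add: power4_eq_xxxx power3_eq_cube abs_mult_self_eq flip: abs_mult)
    also have "\<dots> \<le> theta_nat m ^ 3 * \<bar>vweight t\<bar>"
      by (intro mult_right_mono power_mono abs_vweight_le) auto
    finally show "vweight t ^ 4 \<le> theta_nat m ^ 3 * \<bar>vweight t\<bar>" .
  qed
  also have "\<dots> = theta_nat m ^ 4 * ?W"
    by (simp add: sum_distrib_left[symmetric] sum_abs_vweight power4_eq_xxxx power3_eq_cube)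
  also have "\<dots> \<le> theta_nat m ^ 4 * (?W ^ 3 / 4)"
  proof (intro mult_left_mono)
    have "m \<noteq> 1" using assms m_eq by simp
    then obtain p :: nat where "prime p" "p dvd m"
      using prime_factor_nat by blast
    then have "p \<in> prime_factors m" using m_pos by (simp add: in_prime_factors_iff)
    then have "1 \<le> card (prime_factors m)"
      by (metis One_nat_def Suc_leI card_gt_0_iff empty_iff finite_set_mset)
    then have "?W \<ge> 2"
      using power_increasing[of 1 "card (prime_factors m)" "2::real"] by simp
    then have "4 * ?W \<le> ?W * ?W * ?W"
      using mult_mono[of 2 ?W 2 ?W] by (simp add: mult_right_mono)
    then show "?W \<le> ?W ^ 3 / 4" by (simp add: power3_eq_cube)
  qed (simp add: \<open>theta_nat m \<ge> 0\<close>)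
  finally show ?thesis using sum_vweight_power4 by simp
qed

lemma main_term_nonneg: "0 \<le> theta_nat m ^ 3 * tau_nat m"
  using sum_nonneg[of vtuples "\<lambda>t. vweight t ^ 4"] by (simp add: sum_vweight_power4)

lemma sum_abs_qweight_resonant_vdiagonal:
  "(\<Sum>q\<in>vdiagonal. \<bar>qweight q\<bar> * of_bool (resonant q)) = theta_nat m ^ 3 * tau_nat m"
proof -
  have "(\<Sum>q\<in>vdiagonal. \<bar>qweight q\<bar> * of_bool (resonant q)) = (\<Sum>q\<in>vdiagonal. qweight q)"
    by (intro sum.cong refl) (auto simp: vdiagonal_def qweight_vdiag resonant_vdiag)
  then show ?thesis by (simp add: sum_qweight_vdiagonal)
qed

end

text \<open>For \<open>q = 3\<close> the diagonal error \<open>2 D\<close> exceeds \<open>\<surd>q D\<close>; it is absorbed using \<open>4 D \<le> M\<close>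
  and the trivial bound \<open>q - 2 = 1\<close> on the Jacobi sums.\<close>

lemma error_terms_le:
  fixes D S M c :: real and q :: nat
  assumes "0 \<le> D" "4 * D \<le> M" "D \<le> S" "S \<le> M"
    and "c \<le> sqrt (real q)" "c \<le> real q - 2" "3 \<le> q"
  shows "2 * D + c * (S - D) \<le> M * sqrt (real q)"
proof (cases "q = 3")
  case True
  then have "c * (S - D) \<le> 1 * (S - D)"
    using assms by (intro mult_right_mono) auto
  then have "2 * D + c * (S - D) \<le> M * (5 / 4)"
    using assms by simp
  moreover have "(5 / 4 :: real) \<le> sqrt 3"
    by (rule real_le_rsqrt) (simp add: power2_eq_square)
  then have "M * (5 / 4) \<le> M * sqrt (real q)"
    using True assms by (intro mult_left_mono) auto
  ultimately show ?thesis by linarith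
next
  case False
  then have "sqrt (real q) \<ge> 2" using assms by (simp add: real_le_rsqrt)
  then have "2 * D \<le> sqrt (real q) * D" using assms by (intro mult_right_mono) auto
  moreover have "c * (S - D) \<le> sqrt (real q) * (S - D)"
    using assms by (intro mult_right_mono) auto
  moreover have "sqrt (real q) * S \<le> sqrt (real q) * M"
    using assms by (intro mult_left_mono) auto
  ultimately show ?thesis by (simp add: algebra_simps)
qed

context discrete_log
begin

lemma N_uv_minus_main_term:
  fixes u v :: 'a
  assumes u: "u \<noteq> 0" and v: "v \<noteq> 0" and q: "CARD('a) > 2"
  defines "D \<equiv> theta_nat m ^ 3 * tau_nat m"
  shows "(of_real (real (N_uv u v) - D * real m * real CARD('a)) :: complex)
    = (\<Sum>q\<in>vquads - vdiagonal. of_real (qweight q) * qterm u v q) - of_real (2 * D * real m)"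
proof -
  have "real (m * (CARD('a) - 2)) = real m * (real CARD('a) - 2)"
    using q by (simp add: of_nat_diff)
  then have "(\<Sum>q\<in>vdiagonal. of_real (qweight q) * qterm u v q)
      = (\<Sum>q\<in>vdiagonal. of_real (qweight q) * of_real (real m * (real CARD('a) - 2)))"
    using qterm_vdiagonal[OF u v] by (intro sum.cong refl) (metis of_real_of_nat_eq)
  also have "\<dots> = of_real (D * real m * (real CARD('a) - 2))"
    by (simp add: D_def sum_qweight_vdiagonal flip: sum_distrib_right of_real_sum)
  finally have diagonal: "(\<Sum>q\<in>vdiagonal. of_real (qweight q) * qterm u v q)
      = of_real (D * real m * (real CARD('a) - 2))" .
  have "(of_nat (N_uv u v) :: complex)
      = (\<Sum>q\<in>vquads - vdiagonal. of_real (qweight q) * qterm u v q)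
        + (\<Sum>q\<in>vdiagonal. of_real (qweight q) * qterm u v q)"
    unfolding N_uv_expansion[OF u v] by (rule sum.subset_diff[OF vdiagonal_subset finite_vquads])
  then show ?thesis
    unfolding diagonal by (simp add: algebra_simps)
qed

lemma N_uv_error_bound:
  fixes u v :: 'a
  assumes u: "u \<noteq> 0" and v: "v \<noteq> 0" and q: "CARD('a) > 2"
  defines "Q \<equiv> real CARD('a)" and "D \<equiv> theta_nat m ^ 3 * tau_nat m"
    and "M \<equiv> theta_nat m ^ 4 * (2 ^ card (prime_factors m)) ^ 3"
  shows "\<bar>real (N_uv u v) - D * real m * Q\<bar> \<le> M * real m * sqrt Q"
proof -
  define S where "S = (\<Sum>q\<in>vquads. \<bar>qweight q\<bar> * of_bool (resonant q))"
  define c where "c = min (sqrt Q) (Q - 2)"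
  let ?rest = "vquads - vdiagonal"
  have "\<bar>real (N_uv u v) - D * real m * Q\<bar>
      = norm ((\<Sum>q\<in>?rest. of_real (qweight q) * qterm u v q) - of_real (2 * D * real m))"
    using N_uv_minus_main_term[OF u v q] by (metis D_def Q_def norm_of_real)
  also have "\<dots> \<le> (\<Sum>q\<in>?rest. norm (of_real (qweight q) * qterm u v q)) + 2 * D * real m"
  proof -
    let ?s = "\<Sum>q\<in>?rest. of_real (qweight q) * qterm u v q" and ?b = "of_real (2 * D * real m) :: complex"
    have "norm ?b = 2 * D * real m"
      using main_term_nonneg unfolding D_def norm_of_real by simp
    moreover have "norm (?s - ?b) \<le> norm ?s + norm ?b" by (rule norm_triangle_ineq4)
    moreover have "norm ?s \<le> (\<Sum>q\<in>?rest. norm (of_real (qweight q) * qterm u v q))" by (rule norm_sum)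
    ultimately show ?thesis by linarith
  qed
  also have "(\<Sum>q\<in>?rest. norm (of_real (qweight q) * qterm u v q))
      \<le> (\<Sum>q\<in>?rest. \<bar>qweight q\<bar> * (real m * c * of_bool (resonant q)))"
    unfolding c_def Q_def norm_mult norm_of_real
    by (intro sum_mono mult_left_mono norm_qterm_off_vdiagonal[OF u v]) auto
  also have "\<dots> = real m * c * (S - D)"
    using sum.subset_diff[OF vdiagonal_subset finite_vquads, of "\<lambda>q. \<bar>qweight q\<bar> * of_bool (resonant q)"]
    by (simp add: S_def D_def sum_abs_qweight_resonant_vdiagonal sum_distrib_left mult_ac)
  finally have "\<bar>real (N_uv u v) - D * real m * Q\<bar> \<le> real m * (2 * D + c * (S - D))"
    by (simp add: algebra_simps)
  also have "\<dots> \<le> real m * (M * sqrt Q)"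
  proof (intro mult_left_mono)
    have "D \<le> S"
      using sum_mono2[OF finite_vquads vdiagonal_subset, of "\<lambda>q. \<bar>qweight q\<bar> * of_bool (resonant q)"]
      by (simp add: S_def D_def sum_abs_qweight_resonant_vdiagonal)
    then show "2 * D + c * (S - D) \<le> M * sqrt Q"
      unfolding Q_def using q main_term_nonneg main_term_le[OF q] sum_abs_qweight_resonant_le
      by (intro error_terms_le) (auto simp: c_def D_def M_def S_def Q_def)
  qed simp
  finally show ?thesis by (simp add: mult_ac)
qed

end

theorem theorem1p3:
  fixes u v :: "'a::{field,finite}"
  assumes "CARD('a) > 2"
    and "u \<noteq> 0" and "v \<noteq> 0"
  shows "\<bar>real (N_uv u v) - theta_nat (CARD('a) - 1) ^ 3 * tau_nat (CARD('a) - 1)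
            * real (CARD('a) - 1) * real CARD('a)\<bar>
         \<le> theta_nat (CARD('a) - 1) ^ 4 * real (W_nat (CARD('a) - 1)) ^ 3
            * real (CARD('a) - 1) * sqrt (real CARD('a))"
proof -
  obtain g :: 'a where "primitive_elem g"
    using exists_primitive_elem by blast
  then interpret discrete_log g "CARD('a) - 1"
    by unfold_locales simp_all
  show ?thesis
    using N_uv_error_bound[OF assms(2,3,1)]
    by (simp add: W_nat_def omega_nat_def)
qed

end
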